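(* Let $G$ be a locally compact group, $G_e$ the connected component of its identity and $q_e:G\to G/G_e$ the quotient map. Let $(\eta_{td},G^{td})$ be the totally disconnected compactification of $G$ and $(\tilde{\eta}_{td},(G/G_e)^{td})$ the totally disconnected compactification of $G/G_e$. Then there is an isomorphism of topological groups $\theta:G^{td}\to(G/G_e)^{td}$ with $\theta\circ\eta_{td}=\tilde{\eta}_{td}\circ q_e$; that is, the compactifications $(\eta_{td},G^{td})$ and $(\tilde{\eta}_{td}\circ q_e,(G/G_e)^{td})$ of $G$ coincide. In particular $G^{td}\cong(G/G_e)^{td}$.
   Context: For a locally compact group $G$, let $(\eta_{ap},G^{ap})$ be its maximal almost periodic (Bohr) compactification: $G^{ap}$ is a compact group and $\eta_{ap}:G\to G^{ap}$ a continuous homomorphism with dense range, universal among such group compactifications. Let $(G^{ap})_e$ be the connected component of the identity in $G^{ap}$ and $q^{ap}_e:G^{ap}\to G^{ap}/(G^{ap})_e$ the quotient map. The totally disconnected compactification of $G$ is $(\eta_{td},G^{td})$ where $G^{td}=G^{ap}/(G^{ap})_e$ and $\eta_{td}=q^{ap}_e\circ\eta_{ap}$. *)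

theory Defs
  imports "HOL-Analysis.Analysis" "HOL-Algebra.Algebra"
begin

definition topological_group :: "('a, 'm) monoid_scheme \<Rightarrow> 'a topology \<Rightarrow> bool" where
  "topological_group G T \<longleftrightarrow>
     group G \<and> topspace T = carrier G \<and>
     continuous_map (prod_topology T T) T (\<lambda>(x, y). x \<otimes>\<^bsub>G\<^esub> y) \<and>
     continuous_map T T (\<lambda>x. inv\<^bsub>G\<^esub> x)"

definition compact_group :: "('a, 'm) monoid_scheme \<Rightarrow> 'a topology \<Rightarrow> bool" where
  "compact_group G T \<longleftrightarrow> topological_group G T \<and> Hausdorff_space T \<and> compact_space T"

definition locally_compact_group :: "('a, 'm) monoid_scheme \<Rightarrow> 'a topology \<Rightarrow> bool" where
  "locally_compact_group G T \<longleftrightarrow>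
     topological_group G T \<and> Hausdorff_space T \<and> locally_compact_space T"

definition cont_hom ::
  "('a, 'm) monoid_scheme \<Rightarrow> 'a topology \<Rightarrow> ('b, 'n) monoid_scheme \<Rightarrow> 'b topology \<Rightarrow> ('a \<Rightarrow> 'b) \<Rightarrow> bool" where
  "cont_hom G T H S h \<longleftrightarrow> h \<in> hom G H \<and> continuous_map T S h"

definition top_group_iso ::
  "('a, 'm) monoid_scheme \<Rightarrow> 'a topology \<Rightarrow> ('b, 'n) monoid_scheme \<Rightarrow> 'b topology \<Rightarrow> ('a \<Rightarrow> 'b) \<Rightarrow> bool" where
  "top_group_iso G T H S h \<longleftrightarrow> h \<in> iso G H \<and> homeomorphic_map T S h"

definition group_compactification ::
  "('a, 'm) monoid_scheme \<Rightarrow> 'a topology \<Rightarrow> ('a \<Rightarrow> 'b) \<Rightarrow> ('b, 'n) monoid_scheme \<Rightarrow> 'b topology \<Rightarrow> bool" where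
  "group_compactification G T h K S \<longleftrightarrow>
     compact_group K S \<and> cont_hom G T K S h \<and> S closure_of (h ` carrier G) = topspace S"

text \<open>Test compactifications are
  taken with carrier a subset of the type \<open>'a set set\<close>, where \<open>'a\<close> is the element
  type of \<open>G\<close>: every group compactification \<open>(L,\<alpha>)\<close> of \<open>G\<close> has cardinality at most
  \<open>2^(2^|G|)\<close> (a Hausdorff space with a dense subset of size \<open>\<kappa>\<close> has at most
  \<open>2^(2^\<kappa>)\<close> points), so it is isomorphic to one of these; hence this is
  universality among all group compactifications.\<close>
definition ap_compactification ::
  "('a, 'm) monoid_scheme \<Rightarrow> 'a topology \<Rightarrow> ('a \<Rightarrow> 'b) \<Rightarrow> ('b, 'n) monoid_scheme \<Rightarrow> 'b topology \<Rightarrow> bool" where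
  "ap_compactification G T \<eta> K S \<longleftrightarrow>
     group_compactification G T \<eta> K S \<and>
     (\<forall>(L :: 'a set set monoid) (R :: 'a set set topology) \<alpha>.
        group_compactification G T \<alpha> L R \<longrightarrow>
        (\<exists>\<phi>. cont_hom K S L R \<phi> \<and> (\<forall>x \<in> carrier G. \<phi> (\<eta> x) = \<alpha> x) \<and>
             (\<forall>\<psi>. cont_hom K S L R \<psi> \<and> (\<forall>x \<in> carrier G. \<psi> (\<eta> x) = \<alpha> x) \<longrightarrow>
                   (\<forall>y \<in> carrier K. \<psi> y = \<phi> y))))"

definition quotient_top :: "'a topology \<Rightarrow> 'a set set \<Rightarrow> 'a set topology" where
  "quotient_top T P = topology (\<lambda>U. U \<subseteq> P \<and> openin T (\<Union>U))"

definition identity_component :: "('a, 'm) monoid_scheme \<Rightarrow> 'a topology \<Rightarrow> 'a set" where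
  "identity_component G T = connected_component_of_set T \<one>\<^bsub>G\<^esub>"

definition comp_quot_group :: "('a, 'm) monoid_scheme \<Rightarrow> 'a topology \<Rightarrow> 'a set monoid" where
  "comp_quot_group G T = G Mod (identity_component G T)"

definition comp_quot_top :: "('a, 'm) monoid_scheme \<Rightarrow> 'a topology \<Rightarrow> 'a set topology" where
  "comp_quot_top G T = quotient_top T (rcosets\<^bsub>G\<^esub> (identity_component G T))"

definition comp_quot_map :: "('a, 'm) monoid_scheme \<Rightarrow> 'a topology \<Rightarrow> 'a \<Rightarrow> 'a set" where
  "comp_quot_map G T x = identity_component G T #>\<^bsub>G\<^esub> x"

end

(*
  A continuous homomorphism into a group whose identity component is trivial kills the identity
  component of its source, and hence factors through the quotient by it.  The quotient of a group
  by its identity component has trivial identity component, because the quotient map has connected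
  fibres (the cosets of the identity component) and so pulls connected closed sets back to
  connected sets.

  Consequently the universal property of K yields a continuous homomorphism
  K/K_e -> L/L_e extending G -> G/G_e -> L -> L/L_e, and the universal property of L, applied to
  the compactification G/G_e -> K/K_e induced by G -> K -> K/K_e, yields one in the opposite
  direction.  Both composites are the identity on a dense subset of a Hausdorff space, hence
  everywhere.
*)

theory Submission
  imports Defs
begin

section \<open>Topological groups and their identity component\<close>

lemma topological_group_group: "topological_group G T \<Longrightarrow> group G"
  and topological_group_topspace: "topological_group G T \<Longrightarrow> topspace T = carrier G"
  by (simp_all add: topological_group_def)

lemma compact_group_topological_group: "compact_group G T \<Longrightarrow> topological_group G T"
  by (simp add: compact_group_def)

lemma continuous_map_group_mult:
  assumes "topological_group G T" "continuous_map Z T f" "continuous_map Z T g"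
  shows "continuous_map Z T (\<lambda>z. f z \<otimes>\<^bsub>G\<^esub> g z)"
proof -
  have "continuous_map (prod_topology T T) T (\<lambda>(x, y). x \<otimes>\<^bsub>G\<^esub> y)"
    using assms(1) by (simp add: topological_group_def)
  from continuous_map_compose[OF continuous_map_pairedI[OF assms(2,3)] this]
  show ?thesis by (simp add: o_def)
qed

lemma continuous_map_group_inv:
  assumes "topological_group G T" "continuous_map Z T f"
  shows "continuous_map Z T (\<lambda>z. inv\<^bsub>G\<^esub> f z)"
proof -
  have "continuous_map T T (\<lambda>x. inv\<^bsub>G\<^esub> x)"
    using assms(1) by (simp add: topological_group_def)
  from continuous_map_compose[OF assms(2) this] show ?thesis by (simp add: o_def)
qed

lemma continuous_map_group_translation:
  assumes "topological_group G T" "a \<in> carrier G" "b \<in> carrier G"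
  shows "continuous_map T T (\<lambda>z. a \<otimes>\<^bsub>G\<^esub> z \<otimes>\<^bsub>G\<^esub> b)"
  using assms
  by (intro continuous_map_group_mult continuous_map_id[unfolded id_def])
    (auto simp: topological_group_topspace)

lemma identity_component_continuous_image:
  assumes "continuous_map T S f" "f \<one>\<^bsub>G\<^esub> = \<one>\<^bsub>M\<^esub>"
  shows "f ` identity_component G T \<subseteq> identity_component M S"
  using connected_component_of_continuous_image[OF assms(1), of "\<one>\<^bsub>G\<^esub>"] assms(2)
  by (auto simp: identity_component_def)

lemma identity_component_normal:
  fixes G (structure)
  assumes tg: "topological_group G T"
  shows "identity_component G T \<lhd> G"
proof -
  interpret group G by (rule topological_group_group[OF tg])
  let ?H = "identity_component G T"
  have top: "topspace T = carrier G" by (rule topological_group_topspace[OF tg])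
  have H_carrier: "?H \<subseteq> carrier G"
    using connected_component_of_subset_topspace top by (metis identity_component_def)
  have one_H: "\<one> \<in> ?H"
    by (simp add: identity_component_def connected_component_of_refl top)
  have conj_H: "a \<otimes> h \<otimes> b \<in> ?H"
    if "a \<in> carrier G" "b \<in> carrier G" "a \<otimes> b = \<one>" "h \<in> ?H" for a b h
    using identity_component_continuous_image[OF continuous_map_group_translation[OF tg that(1,2)],
        where G = G and M = G] that by auto
  have inv_H: "inv h \<in> ?H" if "h \<in> ?H" for h
    using identity_component_continuous_image[OF continuous_map_group_inv[OF tg continuous_map_id],
        where G = G and M = G] that by auto
  have "subgroup ?H G"
  proof (rule subgroupI)
    fix a b assume ab: "a \<in> ?H" "b \<in> ?H"
    then have a: "a \<in> carrier G" and a_comp: "connected_component_of T \<one> a"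
      using H_carrier by (auto simp: identity_component_def)
    have "connected_component_of T \<one> b"
      using ab by (simp add: identity_component_def)
    from connected_component_of_continuous_image[OF
        continuous_map_group_translation[OF tg a one_closed] this]
    have "connected_component_of T a (a \<otimes> b)"
      using a ab H_carrier by auto
    with a_comp show "a \<otimes> b \<in> ?H"
      unfolding identity_component_def by (meson connected_component_of_trans mem_Collect_eq)
  qed (use H_carrier one_H inv_H in auto)
  then show ?thesis
    unfolding normal_inv_iff using conj_H by auto
qed

lemma openin_quotient_top:
  assumes "pairwise disjnt P"
  shows "openin (quotient_top T P) U \<longleftrightarrow> U \<subseteq> P \<and> openin T (\<Union>U)"
proof -
  have "istopology (\<lambda>U. U \<subseteq> P \<and> openin T (\<Union>U))"
    unfolding istopology_def
  proof (rule conjI; intro allI impI)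
    fix U V assume U: "U \<subseteq> P \<and> openin T (\<Union>U)" and V: "V \<subseteq> P \<and> openin T (\<Union>V)"
    have "A = B" if "A \<in> U" "B \<in> V" "z \<in> A" "z \<in> B" for z A B
      using assms U V that unfolding pairwise_def disjnt_def by blast
    then have "\<Union>(U \<inter> V) = \<Union>U \<inter> \<Union>V"
      by blast
    then show "U \<inter> V \<subseteq> P \<and> openin T (\<Union>(U \<inter> V))"
      using U V by auto
  next
    fix \<U> assume "\<forall>U\<in>\<U>. U \<subseteq> P \<and> openin T (\<Union>U)"
    moreover have "\<Union>(\<Union>\<U>) = (\<Union>U\<in>\<U>. \<Union>U)" by auto
    ultimately show "\<Union>\<U> \<subseteq> P \<and> openin T (\<Union>(\<Union>\<U>))"
      by auto
  qed
  then show ?thesis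
    by (simp add: quotient_top_def)
qed

lemma quotient_map_quotient_top:
  assumes disj: "pairwise disjnt (f ` topspace T)"
    and block: "\<And>x. x \<in> topspace T \<Longrightarrow> x \<in> f x \<and> f x \<subseteq> topspace T"
  shows "quotient_map T (quotient_top T (f ` topspace T)) f"
proof -
  let ?P = "f ` topspace T"
  have preimage: "{x \<in> topspace T. f x \<in> V} = \<Union>V" if V: "V \<subseteq> ?P" for V
  proof
    show "{x \<in> topspace T. f x \<in> V} \<subseteq> \<Union>V"
      using block by blast
    show "\<Union>V \<subseteq> {x \<in> topspace T. f x \<in> V}"
    proof
      fix y assume "y \<in> \<Union>V"
      then obtain x where x: "x \<in> topspace T" "f x \<in> V" "y \<in> f x"
        using V by blast
      then have y: "y \<in> topspace T"
        using block by blast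
      then have "f y = f x"
        using disj x block unfolding pairwise_def disjnt_def by blast
      then show "y \<in> {x \<in> topspace T. f x \<in> V}"
        using x y by simp
    qed
  qed
  have "\<Union>?P = topspace T"
    using block by blast
  then have "openin (quotient_top T ?P) ?P"
    by (simp add: openin_quotient_top[OF disj])
  then have top: "topspace (quotient_top T ?P) = ?P"
    using openin_quotient_top[OF disj, of T "topspace (quotient_top T ?P)"]
    by (simp add: openin_subset subset_antisym)
  show ?thesis
    unfolding quotient_map_def top using preimage by (auto simp: openin_quotient_top[OF disj])
qed

section \<open>The quotient by the identity component\<close>

context
  fixes G :: "('a, 'm) monoid_scheme" (structure) and T :: "'a topology"
  assumes tg: "topological_group G T"
begin

interpretation group G
  by (rule topological_group_group[OF tg])

lemma identity_component_subgroup: "subgroup (identity_component G T) G"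
  using identity_component_normal[OF tg] by (rule normal_imp_subgroup)

lemma group_comp_quot_group: "group (comp_quot_group G T)"
  unfolding comp_quot_group_def
  by (rule normal.factorgroup_is_group[OF identity_component_normal[OF tg]])

lemma carrier_comp_quot_group: "carrier (comp_quot_group G T) = comp_quot_map G T ` carrier G"
  by (simp add: comp_quot_group_def comp_quot_map_def carrier_FactGroup)

lemma one_comp_quot_group: "\<one>\<^bsub>comp_quot_group G T\<^esub> = identity_component G T"
  by (simp add: comp_quot_group_def)

lemma comp_quot_map_eq_iff:
  assumes "x \<in> carrier G" "y \<in> carrier G"
  shows "comp_quot_map G T x = comp_quot_map G T y \<longleftrightarrow> (\<exists>h \<in> identity_component G T. x = h \<otimes> y)"
proof -
  have "comp_quot_map G T x = comp_quot_map G T y \<longleftrightarrow> x \<in> identity_component G T #> y"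
    using repr_independence[OF _ assms(2) identity_component_subgroup]
      repr_independenceD[OF identity_component_subgroup assms(1)]
    by (auto simp: comp_quot_map_def)
  then show ?thesis
    by (auto simp: r_coset_def)
qed

lemma comp_quot_map_eq_one_iff:
  assumes "x \<in> carrier G"
  shows "comp_quot_map G T x = \<one>\<^bsub>comp_quot_group G T\<^esub> \<longleftrightarrow> x \<in> identity_component G T"
proof -
  have "\<one>\<^bsub>comp_quot_group G T\<^esub> = comp_quot_map G T \<one>"
    using coset_join2[OF one_closed identity_component_subgroup]
      subgroup.one_closed[OF identity_component_subgroup]
    by (simp add: one_comp_quot_group comp_quot_map_def)
  moreover have "h \<otimes> \<one> = h" if "h \<in> identity_component G T" for h
    using that subgroup.subset[OF identity_component_subgroup] by auto
  ultimately show ?thesis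
    using comp_quot_map_eq_iff[OF assms one_closed] by auto
qed

lemma comp_quot_saturation:
  assumes U: "U \<subseteq> carrier G"
  shows "{x \<in> carrier G. comp_quot_map G T x \<in> comp_quot_map G T ` U} =
    (\<lambda>(h, u). h \<otimes> u) ` (identity_component G T \<times> U)"
proof (intro equalityI subsetI)
  fix x assume "x \<in> {x \<in> carrier G. comp_quot_map G T x \<in> comp_quot_map G T ` U}"
  then obtain u where x: "x \<in> carrier G" and u: "u \<in> U" "comp_quot_map G T x = comp_quot_map G T u"
    by auto
  then obtain h where "h \<in> identity_component G T" "x = h \<otimes> u"
    using comp_quot_map_eq_iff[OF x] U by blast
  with u(1) show "x \<in> (\<lambda>(h, u). h \<otimes> u) ` (identity_component G T \<times> U)"
    by force
next
  fix x assume "x \<in> (\<lambda>(h, u). h \<otimes> u) ` (identity_component G T \<times> U)"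
  then obtain h u where hu: "h \<in> identity_component G T" "u \<in> U" "x = h \<otimes> u"
    by auto
  then have x: "x \<in> carrier G"
    using subgroup.subset[OF identity_component_subgroup] U by auto
  have "comp_quot_map G T x = comp_quot_map G T u"
    using comp_quot_map_eq_iff[OF x, of u] hu U by blast
  with x hu(2) show "x \<in> {x \<in> carrier G. comp_quot_map G T x \<in> comp_quot_map G T ` U}"
    by auto
qed

lemma quotient_map_comp_quot_map: "quotient_map T (comp_quot_top G T) (comp_quot_map G T)"
proof -
  have top: "topspace T = carrier G"
    by (rule topological_group_topspace[OF tg])
  have cosets: "rcosets (identity_component G T) = comp_quot_map G T ` topspace T"
    using carrier_comp_quot_group by (simp add: comp_quot_group_def FactGroup_def top)
  show ?thesis
    unfolding comp_quot_top_def cosets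
  proof (rule quotient_map_quotient_top)
    show "pairwise disjnt (comp_quot_map G T ` topspace T)"
      using rcos_disjoint[OF identity_component_subgroup] cosets by simp
    show "x \<in> comp_quot_map G T x \<and> comp_quot_map G T x \<subseteq> topspace T" if "x \<in> topspace T" for x
      using that top rcos_self[OF _ identity_component_subgroup]
        r_coset_subset_G[OF subgroup.subset[OF identity_component_subgroup]]
      by (simp add: comp_quot_map_def)
  qed
qed

lemma topspace_comp_quot_top: "topspace (comp_quot_top G T) = carrier (comp_quot_group G T)"
  using quotient_map_comp_quot_map
  by (simp add: quotient_map_def carrier_comp_quot_group topological_group_topspace[OF tg])

lemma cont_hom_comp_quot_map:
  "cont_hom G T (comp_quot_group G T) (comp_quot_top G T) (comp_quot_map G T)"
  using normal.r_coset_hom_Mod[OF identity_component_normal[OF tg]]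
    quotient_imp_continuous_map[OF quotient_map_comp_quot_map]
  by (simp add: cont_hom_def comp_quot_group_def comp_quot_map_def[abs_def])

lemma continuous_map_comp_quot_inv:
  "continuous_map (comp_quot_top G T) (comp_quot_top G T) (\<lambda>x. inv\<^bsub>comp_quot_group G T\<^esub> x)"
proof (rule continuous_compose_quotient_map[OF quotient_map_comp_quot_map])
  have q_hom: "group_hom G (comp_quot_group G T) (comp_quot_map G T)"
    using cont_hom_comp_quot_map group_comp_quot_group
    by (simp add: group_hom_def group_hom_axioms_def cont_hom_def is_group)
  have "continuous_map T (comp_quot_top G T) (\<lambda>x. comp_quot_map G T (inv x))"
    using continuous_map_compose[OF continuous_map_group_inv[OF tg continuous_map_id]
        quotient_imp_continuous_map[OF quotient_map_comp_quot_map]]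
    by (simp add: o_def)
  then show "continuous_map T (comp_quot_top G T)
      ((\<lambda>x. inv\<^bsub>comp_quot_group G T\<^esub> x) \<circ> comp_quot_map G T)"
    by (rule continuous_map_eq)
      (simp add: topological_group_topspace[OF tg] group_hom.hom_inv[OF q_hom])
qed

lemma monotone_map_comp_quot_map: "monotone_map T (comp_quot_top G T) (comp_quot_map G T)"
  unfolding monotone_map_def
proof (intro conjI ballI)
  let ?H = "identity_component G T" and ?q = "comp_quot_map G T"
  have top: "topspace T = carrier G"
    by (rule topological_group_topspace[OF tg])
  show "?q ` topspace T \<subseteq> topspace (comp_quot_top G T)"
    using quotient_map_comp_quot_map by (simp add: quotient_map_def)
  fix y assume "y \<in> topspace (comp_quot_top G T)"
  then obtain a where a: "a \<in> carrier G" "y = ?q a"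
    by (auto simp: topspace_comp_quot_top carrier_comp_quot_group)
  have "{x \<in> topspace T. ?q x = ?q a} = (\<lambda>(h, u). h \<otimes> u) ` (?H \<times> {a})"
    using comp_quot_saturation[of "{a}"] a(1) top by simp
  also have "\<dots> = (\<lambda>h. h \<otimes> a) ` ?H"
    by auto
  finally have fibre: "{x \<in> topspace T. ?q x = y} = (\<lambda>h. h \<otimes> a) ` ?H"
    using a(2) by simp
  have "connectedin T ((\<lambda>h. h \<otimes> a) ` ?H)"
  proof (rule connectedin_continuous_map_image)
    show "continuous_map T T (\<lambda>h. h \<otimes> a)"
      using a(1) top
      by (intro continuous_map_group_mult[OF tg continuous_map_id[unfolded id_def]]) simp
    show "connectedin T ?H"
      by (simp add: identity_component_def connectedin_connected_component_of)
  qed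
  then show "connectedin T {x \<in> topspace T. ?q x = y}"
    unfolding fibre .
qed

lemma identity_component_comp_quot:
  "identity_component (comp_quot_group G T) (comp_quot_top G T) = {\<one>\<^bsub>comp_quot_group G T\<^esub>}"
proof -
  let ?Q = "comp_quot_top G T" and ?q = "comp_quot_map G T" and ?one = "\<one>\<^bsub>comp_quot_group G T\<^esub>"
  let ?C = "identity_component (comp_quot_group G T) ?Q"
  have top: "topspace T = carrier G"
    by (rule topological_group_topspace[OF tg])
  have one_C: "?one \<in> ?C"
    using monoid.one_closed[OF group.is_monoid[OF group_comp_quot_group]]
    by (simp add: identity_component_def connected_component_of_refl topspace_comp_quot_top)
  have "connectedin ?Q ?C" "closedin ?Q ?C"
    by (simp_all add: identity_component_def connectedin_connected_component_of
        closedin_connected_component_of)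
  then have "connectedin T {x \<in> topspace T. ?q x \<in> ?C}"
    by (intro connectedin_monotone_quotient_map_preimage[OF monotone_map_comp_quot_map
          quotient_map_comp_quot_map]) auto
  moreover have "\<one> \<in> {x \<in> topspace T. ?q x \<in> ?C}"
    using one_C comp_quot_map_eq_one_iff[OF one_closed]
      subgroup.one_closed[OF identity_component_subgroup] top
    by simp
  ultimately have preimage: "{x \<in> topspace T. ?q x \<in> ?C} \<subseteq> identity_component G T"
    unfolding identity_component_def[of G T] by (rule connected_component_of_maximal)
  have "y = ?one" if y: "y \<in> ?C" for y
  proof -
    have "y \<in> topspace ?Q"
      using y connected_component_of_subset_topspace by (fastforce simp: identity_component_def)
    then obtain a where a: "a \<in> carrier G" "y = ?q a"
      by (auto simp: topspace_comp_quot_top carrier_comp_quot_group)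
    with y preimage top have "a \<in> identity_component G T"
      by auto
    then show ?thesis
      using comp_quot_map_eq_one_iff[OF a(1)] a(2) by simp
  qed
  with one_C show ?thesis
    by blast
qed

lemma hom_eq_if_comp_quot_map_eq:
  assumes f: "f \<in> hom G M" and M: "group M"
    and kill: "f ` identity_component G T \<subseteq> {\<one>\<^bsub>M\<^esub>}"
    and xy: "x \<in> carrier G" "y \<in> carrier G" "comp_quot_map G T x = comp_quot_map G T y"
  shows "f x = f y"
proof -
  obtain h where h: "h \<in> identity_component G T" "x = h \<otimes> y"
    using comp_quot_map_eq_iff[OF xy(1,2)] xy(3) by blast
  then have "h \<in> carrier G"
    using subgroup.subset[OF identity_component_subgroup] by blast
  then have "f x = f h \<otimes>\<^bsub>M\<^esub> f y"
    unfolding h(2) by (rule hom_mult[OF f _ xy(2)])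
  moreover have "f h = \<one>\<^bsub>M\<^esub>"
    using kill h(1) by blast
  ultimately show ?thesis
    using monoid.l_one[OF group.is_monoid[OF M] hom_in_carrier[OF f xy(2)]] by simp
qed

lemma comp_quot_lift:
  assumes f: "cont_hom G T M S f" and M: "group M"
    and kill: "f ` identity_component G T \<subseteq> {\<one>\<^bsub>M\<^esub>}"
  shows "\<exists>g. cont_hom (comp_quot_group G T) (comp_quot_top G T) M S g \<and>
    (\<forall>x \<in> carrier G. g (comp_quot_map G T x) = f x)"
proof -
  have f_hom: "f \<in> hom G M" and f_cont: "continuous_map T S f"
    using f by (simp_all add: cont_hom_def)
  obtain g where g: "g \<in> hom (comp_quot_group G T) M"
    and g_q: "\<And>x. x \<in> carrier G \<Longrightarrow> g (comp_quot_map G T x) = f x"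
    using FactGroup_universal[OF f_hom identity_component_normal[OF tg]
        hom_eq_if_comp_quot_map_eq[OF f_hom M kill, unfolded comp_quot_map_def],
        folded comp_quot_group_def comp_quot_map_def]
    by metis
  have "continuous_map (comp_quot_top G T) S g"
  proof (rule continuous_compose_quotient_map[OF quotient_map_comp_quot_map])
    show "continuous_map T S (g \<circ> comp_quot_map G T)"
      by (rule continuous_map_eq[OF f_cont]) (simp add: g_q topological_group_topspace[OF tg])
  qed
  with g g_q show ?thesis
    by (auto simp: cont_hom_def)
qed

end

context
  fixes G :: "('a, 'm) monoid_scheme" (structure) and T :: "'a topology"
  assumes cg: "compact_group G T"
begin

private lemma tg: "topological_group G T"
  using cg by (rule compact_group_topological_group)

interpretation group G
  by (rule topological_group_group[OF tg])

lemma closed_map_comp_quot_map: "closed_map T (comp_quot_top G T) (comp_quot_map G T)"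
  unfolding closed_map_def
proof (intro allI impI)
  fix U assume U: "closedin T U"
  let ?H = "identity_component G T" and ?q = "comp_quot_map G T"
  have Haus: "Hausdorff_space T" and cpt: "compact_space T"
    using cg by (simp_all add: compact_group_def)
  have top: "topspace T = carrier G"
    by (rule topological_group_topspace[OF tg])
  have U_carrier: "U \<subseteq> carrier G"
    using closedin_subset[OF U] top by simp
  have "compactin T ?H"
    by (rule closedin_compact_space[OF cpt])
      (simp add: identity_component_def closedin_connected_component_of)
  moreover have "compactin T U"
    by (rule closedin_compact_space[OF cpt U])
  ultimately have "compactin (prod_topology T T) (?H \<times> U)"
    by (simp add: compactin_Times)
  moreover have "continuous_map (prod_topology T T) T (\<lambda>(h, u). h \<otimes> u)"
    using tg by (simp add: topological_group_def)
  ultimately have "compactin T ((\<lambda>(h, u). h \<otimes> u) ` (?H \<times> U))"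
    by (rule image_compactin)
  then have "closedin T {x \<in> topspace T. ?q x \<in> ?q ` U}"
    unfolding top comp_quot_saturation[OF tg U_carrier] by (rule compactin_imp_closedin[OF Haus])
  moreover have "?q ` U \<subseteq> topspace (comp_quot_top G T)"
    using U_carrier by (auto simp: topspace_comp_quot_top[OF tg] carrier_comp_quot_group[OF tg])
  ultimately show "closedin (comp_quot_top G T) (?q ` U)"
    using quotient_map_comp_quot_map[OF tg] unfolding quotient_map_closedin by blast
qed

lemma compact_Hausdorff_comp_quot_top:
  "compact_space (comp_quot_top G T) \<and> Hausdorff_space (comp_quot_top G T)"
proof -
  have Haus: "Hausdorff_space T" and cpt: "compact_space T"
    using cg by (simp_all add: compact_group_def)
  have q_cont: "continuous_map T (comp_quot_top G T) (comp_quot_map G T)"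
    and q_surj: "comp_quot_map G T ` topspace T = topspace (comp_quot_top G T)"
    using quotient_map_comp_quot_map[OF tg]
    by (simp_all add: quotient_imp_continuous_map quotient_map_def)
  have "compact_space (comp_quot_top G T)"
    using image_compactin[OF cpt[unfolded compact_space_def] q_cont] q_surj
    by (simp add: compact_space_def)
  moreover have "normal_space T"
    by (simp add: compact_Hausdorff_or_regular_imp_normal_space cpt Haus)
  then have "Hausdorff_space (comp_quot_top G T)"
    using normal_Hausdorff_space_closed_continuous_map_image[OF _ Haus closed_map_comp_quot_map
        q_cont q_surj] by simp
  ultimately show ?thesis ..
qed

lemma continuous_map_comp_quot_mult:
  "continuous_map (prod_topology (comp_quot_top G T) (comp_quot_top G T)) (comp_quot_top G T)
    (\<lambda>(x, y). x \<otimes>\<^bsub>comp_quot_group G T\<^esub> y)"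
proof -
  let ?M = "comp_quot_group G T" and ?Q = "comp_quot_top G T" and ?q = "comp_quot_map G T"
  have q_cont: "continuous_map T ?Q ?q" and q_surj: "?q ` topspace T = topspace ?Q"
    using quotient_map_comp_quot_map[OF tg]
    by (simp_all add: quotient_imp_continuous_map quotient_map_def)
  have q_hom: "group_hom G ?M ?q"
    using cont_hom_comp_quot_map[OF tg] group_comp_quot_group[OF tg]
    by (simp add: group_hom_def group_hom_axioms_def cont_hom_def is_group)
  show ?thesis
  proof (rule continuous_compose_quotient_map)
    show "quotient_map (prod_topology T T) (prod_topology ?Q ?Q) (\<lambda>(x, y). (?q x, ?q y))"
    proof (rule continuous_imp_quotient_map)
      show "(\<lambda>(x, y). (?q x, ?q y)) ` topspace (prod_topology T T) = topspace (prod_topology ?Q ?Q)"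
        using map_prod_surj_on[OF q_surj q_surj] by (simp add: topspace_prod_topology map_prod_def)
    qed (use cg compact_Hausdorff_comp_quot_top in \<open>simp_all add: continuous_map_prod_top q_cont
          compact_space_prod_topology Hausdorff_space_prod_topology compact_group_def\<close>)
    have "continuous_map (prod_topology T T) ?Q (\<lambda>(x, y). ?q (x \<otimes> y))"
      using continuous_map_compose[OF _ q_cont, of _ "\<lambda>(x, y). x \<otimes> y"] tg
      by (simp add: topological_group_def o_def case_prod_unfold)
    then show "continuous_map (prod_topology T T) ?Q
        ((\<lambda>(x, y). x \<otimes>\<^bsub>?M\<^esub> y) \<circ> (\<lambda>(x, y). (?q x, ?q y)))"
      by (rule continuous_map_eq) (clarsimp simp: topspace_prod_topology
          topological_group_topspace[OF tg] group_hom.hom_mult[OF q_hom])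
  qed
qed

lemma compact_group_comp_quot: "compact_group (comp_quot_group G T) (comp_quot_top G T)"
  using group_comp_quot_group[OF tg] topspace_comp_quot_top[OF tg] compact_Hausdorff_comp_quot_top
    continuous_map_comp_quot_mult continuous_map_comp_quot_inv[OF tg]
  by (simp add: compact_group_def topological_group_def)

end

lemma comp_quot_lift_into_comp_quot:
  assumes G: "topological_group G T" and M: "topological_group M S"
    and f: "cont_hom G T (comp_quot_group M S) (comp_quot_top M S) f"
  shows "\<exists>g. cont_hom (comp_quot_group G T) (comp_quot_top G T)
      (comp_quot_group M S) (comp_quot_top M S) g \<and>
    (\<forall>x \<in> carrier G. g (comp_quot_map G T x) = f x)"
proof (rule comp_quot_lift[OF G f group_comp_quot_group[OF M]])
  have "f \<one>\<^bsub>G\<^esub> = \<one>\<^bsub>comp_quot_group M S\<^esub>"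
    using f topological_group_group[OF G] group_comp_quot_group[OF M]
    by (simp add: cont_hom_def hom_one)
  then show "f ` identity_component G T \<subseteq> {\<one>\<^bsub>comp_quot_group M S\<^esub>}"
    using identity_component_continuous_image[of T "comp_quot_top M S" f G "comp_quot_group M S"]
      f identity_component_comp_quot[OF M] by (simp add: cont_hom_def)
qed

section \<open>Group compactifications\<close>

lemma cont_hom_compose:
  assumes "cont_hom A TA B TB f" "cont_hom B TB C TC g"
  shows "cont_hom A TA C TC (g \<circ> f)"
  using assms unfolding cont_hom_def by (blast intro: hom_compose continuous_map_compose)

lemma cont_hom_in_carrier: "cont_hom G T M S f \<Longrightarrow> x \<in> carrier G \<Longrightarrow> f x \<in> carrier M"
  unfolding cont_hom_def by (blast intro: hom_in_carrier)

lemma group_compactification_compact_group: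
  "group_compactification G T \<alpha> M S \<Longrightarrow> compact_group M S"
  and group_compactification_cont_hom:
  "group_compactification G T \<alpha> M S \<Longrightarrow> cont_hom G T M S \<alpha>"
  and group_compactification_dense:
  "group_compactification G T \<alpha> M S \<Longrightarrow> S closure_of (\<alpha> ` carrier G) = topspace S"
  by (simp_all add: group_compactification_def)

lemma group_compactification_image:
  assumes \<alpha>: "group_compactification G T \<alpha> M S"
    and h: "cont_hom M S N R h" "h ` carrier M = carrier N" and N: "compact_group N R"
  shows "group_compactification G T (h \<circ> \<alpha>) N R"
proof -
  have S: "topspace S = carrier M" and R: "topspace R = carrier N"
    using group_compactification_compact_group[OF \<alpha>] N
    by (simp_all add: compact_group_def topological_group_def)
  have h_cont: "continuous_map S R h"
    using h by (simp add: cont_hom_def)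
  have "topspace R = h ` (S closure_of (\<alpha> ` carrier G))"
    using group_compactification_dense[OF \<alpha>] h(2) S R by simp
  also have "\<dots> \<subseteq> R closure_of ((h \<circ> \<alpha>) ` carrier G)"
    using continuous_map_image_closure_subset[OF h_cont] by (metis image_comp)
  finally have "R closure_of ((h \<circ> \<alpha>) ` carrier G) = topspace R"
    by (simp add: closure_of_subset_topspace subset_antisym)
  then show ?thesis
    using N cont_hom_compose[OF group_compactification_cont_hom[OF \<alpha>] h(1)]
    by (simp add: group_compactification_def)
qed

lemma group_compactification_pullback:
  assumes \<gamma>: "group_compactification A TA \<gamma> M S"
    and p: "cont_hom B TB A TA p" "p ` carrier B = carrier A"
  shows "group_compactification B TB (\<gamma> \<circ> p) M S"
proof -
  have "(\<gamma> \<circ> p) ` carrier B = \<gamma> ` carrier A"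
    using p(2) by (metis image_comp)
  then show ?thesis
    using \<gamma> cont_hom_compose[OF p(1) group_compactification_cont_hom[OF \<gamma>]]
    by (simp add: group_compactification_def)
qed

lemma group_compactification_descend:
  assumes \<alpha>: "group_compactification B TB \<alpha> M S" and \<gamma>: "cont_hom A TA M S \<gamma>"
    and p: "p ` carrier B = carrier A" "\<And>b. b \<in> carrier B \<Longrightarrow> \<gamma> (p b) = \<alpha> b"
  shows "group_compactification A TA \<gamma> M S"
proof -
  have "\<gamma> ` carrier A = \<alpha> ` carrier B"
    unfolding p(1)[symmetric] image_image using p(2) by (rule image_cong[OF refl])
  then show ?thesis
    using \<alpha> \<gamma> by (simp add: group_compactification_def)
qed

lemma group_compactifications_iso:
  assumes \<alpha>: "group_compactification G T \<alpha> M S" and \<beta>: "group_compactification G T \<beta> N R"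
    and \<phi>: "cont_hom M S N R \<phi>" and \<psi>: "cont_hom N R M S \<psi>"
    and \<phi>\<alpha>: "\<And>x. x \<in> carrier G \<Longrightarrow> \<phi> (\<alpha> x) = \<beta> x"
    and \<psi>\<beta>: "\<And>x. x \<in> carrier G \<Longrightarrow> \<psi> (\<beta> x) = \<alpha> x"
  shows "top_group_iso M S N R \<phi>"
proof -
  have M: "topspace S = carrier M" and "Hausdorff_space S"
    and N: "topspace R = carrier N" and "Hausdorff_space R"
    using group_compactification_compact_group[OF \<alpha>] group_compactification_compact_group[OF \<beta>]
    by (simp_all add: compact_group_def topological_group_def)
  have \<phi>_cont: "continuous_map S R \<phi>" and \<psi>_cont: "continuous_map R S \<psi>"
    using \<phi> \<psi> by (simp_all add: cont_hom_def)
  have \<psi>\<phi>: "\<psi> (\<phi> m) = m" if "m \<in> topspace S" for m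
  proof (rule forall_in_closure_of_eq[of m S "\<alpha> ` carrier G"])
    show "m \<in> S closure_of (\<alpha> ` carrier G)"
      using group_compactification_dense[OF \<alpha>] that by simp
    show "continuous_map S S (\<lambda>m. \<psi> (\<phi> m))"
      using continuous_map_compose[OF \<phi>_cont \<psi>_cont] by (simp add: o_def)
  qed (use \<phi>\<alpha> \<psi>\<beta> \<open>Hausdorff_space S\<close> in \<open>auto simp: continuous_map_id[unfolded id_def]\<close>)
  have \<phi>\<psi>: "\<phi> (\<psi> n) = n" if "n \<in> topspace R" for n
  proof (rule forall_in_closure_of_eq[of n R "\<beta> ` carrier G"])
    show "n \<in> R closure_of (\<beta> ` carrier G)"
      using group_compactification_dense[OF \<beta>] that by simp
    show "continuous_map R R (\<lambda>n. \<phi> (\<psi> n))"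
      using continuous_map_compose[OF \<psi>_cont \<phi>_cont] by (simp add: o_def)
  qed (use \<phi>\<alpha> \<psi>\<beta> \<open>Hausdorff_space R\<close> in \<open>auto simp: continuous_map_id[unfolded id_def]\<close>)
  have "group_isomorphisms M N \<phi> \<psi>"
    using \<phi> \<psi> \<psi>\<phi> \<phi>\<psi> M N by (simp add: group_isomorphisms_def cont_hom_def)
  moreover have "homeomorphic_maps S R \<phi> \<psi>"
    using \<phi>_cont \<psi>_cont \<psi>\<phi> \<phi>\<psi> by (simp add: homeomorphic_maps_def)
  ultimately show ?thesis
    by (simp add: top_group_iso_def group_isomorphisms_imp_iso homeomorphic_maps_imp_map)
qed

lemma group_compactification_comp_quot:
  assumes \<alpha>: "group_compactification G T \<alpha> M S"
  shows "group_compactification G T (comp_quot_map M S \<circ> \<alpha>) (comp_quot_group M S) (comp_quot_top M S)"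
proof -
  have M: "compact_group M S"
    by (rule group_compactification_compact_group[OF \<alpha>])
  note tg = compact_group_topological_group[OF M]
  show ?thesis
    by (rule group_compactification_image[OF \<alpha> cont_hom_comp_quot_map[OF tg]
          carrier_comp_quot_group[OF tg, symmetric] compact_group_comp_quot[OF M]])
qed

lemma group_compactification_factor_comp_quot:
  assumes G: "topological_group G T" and M: "topological_group M S"
    and \<alpha>: "group_compactification G T \<alpha> (comp_quot_group M S) (comp_quot_top M S)"
  shows "\<exists>\<beta>. group_compactification (comp_quot_group G T) (comp_quot_top G T) \<beta>
      (comp_quot_group M S) (comp_quot_top M S) \<and>
    (\<forall>x \<in> carrier G. \<beta> (comp_quot_map G T x) = \<alpha> x)"
proof -
  obtain \<beta> where \<beta>: "cont_hom (comp_quot_group G T) (comp_quot_top G T)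
      (comp_quot_group M S) (comp_quot_top M S) \<beta>"
    "\<forall>x \<in> carrier G. \<beta> (comp_quot_map G T x) = \<alpha> x"
    using comp_quot_lift_into_comp_quot[OF G M group_compactification_cont_hom[OF \<alpha>]] by blast
  have "group_compactification (comp_quot_group G T) (comp_quot_top G T) \<beta>
      (comp_quot_group M S) (comp_quot_top M S)"
    by (rule group_compactification_descend[OF \<alpha> \<beta>(1) carrier_comp_quot_group[OF G, symmetric]])
      (use \<beta>(2) in simp)
  with \<beta>(2) show ?thesis
    by blast
qed

section \<open>Universality of the maximal almost periodic compactification\<close>

lemma inj_on_neighbourhood_traces:
  assumes "Hausdorff_space S" and dense: "S closure_of (\<alpha> ` A) = topspace S"
  shows "inj_on (\<lambda>m. {{a \<in> A. \<alpha> a \<in> U} | U. openin S U \<and> m \<in> U}) (topspace S)"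
proof (rule inj_onI, rule ccontr)
  fix m m' assume m: "m \<in> topspace S" "m' \<in> topspace S" and "m \<noteq> m'"
    and traces: "{{a \<in> A. \<alpha> a \<in> U} | U. openin S U \<and> m \<in> U} =
      {{a \<in> A. \<alpha> a \<in> U} | U. openin S U \<and> m' \<in> U}"
  then obtain U V where UV: "openin S U" "openin S V" "m \<in> U" "m' \<in> V" "disjnt U V"
    using \<open>Hausdorff_space S\<close> unfolding Hausdorff_space_def by metis
  then have "{a \<in> A. \<alpha> a \<in> U} \<in> {{a \<in> A. \<alpha> a \<in> U} | U. openin S U \<and> m' \<in> U}"
    unfolding traces[symmetric] by blast
  then obtain W where W: "openin S W" "m' \<in> W" "{a \<in> A. \<alpha> a \<in> U} = {a \<in> A. \<alpha> a \<in> W}"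
    by blast
  have "m' \<in> S closure_of (\<alpha> ` A)"
    using dense m(2) by simp
  then obtain a where "a \<in> A" "\<alpha> a \<in> W \<inter> V"
    using W(1,2) UV(2,4) unfolding in_closure_of by (metis IntI imageE openin_Int)
  with W(3) UV(5) show False
    by (auto simp: disjnt_def)
qed

definition transport_monoid :: "('a \<Rightarrow> 'b) \<Rightarrow> ('a, 'm) monoid_scheme \<Rightarrow> 'b monoid" where
  "transport_monoid e M =
     \<lparr>carrier = e ` carrier M,
      mult = (\<lambda>a b. e (inv_into (carrier M) e a \<otimes>\<^bsub>M\<^esub> inv_into (carrier M) e b)),
      one = e \<one>\<^bsub>M\<^esub>\<rparr>"

lemma transport_monoid_iso:
  fixes M (structure)
  assumes "group M" and inj: "inj_on e (carrier M)"
  shows "group (transport_monoid e M)" and "e \<in> iso M (transport_monoid e M)"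
proof -
  interpret group M by fact
  let ?M' = "transport_monoid e M" and ?e' = "inv_into (carrier M) e"
  have carrier: "carrier ?M' = e ` carrier M"
    and mult: "\<And>a b. a \<otimes>\<^bsub>?M'\<^esub> b = e (?e' a \<otimes> ?e' b)" and one: "\<one>\<^bsub>?M'\<^esub> = e \<one>"
    by (simp_all add: transport_monoid_def)
  have e'_e [simp]: "?e' (e x) = x" if "x \<in> carrier M" for x
    using inj that by (rule inv_into_f_f)
  show "group ?M'"
  proof (rule groupI)
    fix a b c assume "a \<in> carrier ?M'" "b \<in> carrier ?M'" "c \<in> carrier ?M'"
    then show "a \<otimes>\<^bsub>?M'\<^esub> b \<otimes>\<^bsub>?M'\<^esub> c = a \<otimes>\<^bsub>?M'\<^esub> (b \<otimes>\<^bsub>?M'\<^esub> c)"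
      by (auto simp: carrier mult m_assoc)
  next
    fix a assume "a \<in> carrier ?M'"
    then show "\<one>\<^bsub>?M'\<^esub> \<otimes>\<^bsub>?M'\<^esub> a = a"
      by (auto simp: carrier mult one)
  next
    fix a assume "a \<in> carrier ?M'"
    then obtain x where x: "x \<in> carrier M" "a = e x"
      by (auto simp: carrier)
    then have "e (inv x) \<in> carrier ?M' \<and> e (inv x) \<otimes>\<^bsub>?M'\<^esub> a = \<one>\<^bsub>?M'\<^esub>"
      by (simp add: carrier mult one)
    then show "\<exists>b \<in> carrier ?M'. b \<otimes>\<^bsub>?M'\<^esub> a = \<one>\<^bsub>?M'\<^esub>"
      by blast
  qed (auto simp: carrier mult one)
  have "e \<in> hom M ?M'"
    by (rule homI) (simp_all add: carrier mult)
  then show "e \<in> iso M ?M'"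
    using inj by (simp add: iso_def bij_betw_def carrier)
qed

lemma homeomorphic_maps_pullback_inv_into:
  assumes "inj_on e (topspace S)"
  shows "homeomorphic_maps S (pullback_topology (e ` topspace S) (inv_into (topspace S) e) S)
    e (inv_into (topspace S) e)"
proof -
  let ?e' = "inv_into (topspace S) e"
  let ?S' = "pullback_topology (e ` topspace S) ?e' S"
  have e'_e: "?e' (e x) = x" if "x \<in> topspace S" for x
    using assms that by (rule inv_into_f_f)
  have top': "topspace ?S' = e ` topspace S"
    using e'_e by (auto simp: topspace_pullback_topology)
  have "continuous_map S ?S' e"
  proof (rule continuous_map_pullback')
    show "continuous_map S S (?e' \<circ> e)"
      by (rule continuous_map_eq[OF continuous_map_id]) (simp add: e'_e)
  qed auto
  moreover have "continuous_map ?S' S ?e'"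
    using continuous_map_pullback[OF continuous_map_id] by simp
  ultimately show ?thesis
    using e'_e top' by (auto simp: homeomorphic_maps_def f_inv_into_f)
qed

lemma compact_group_iso_image:
  assumes M: "compact_group M S" and M': "group M'" and top': "topspace S' = carrier M'"
    and iso: "e \<in> iso M M'" and hm: "homeomorphic_maps S S' e e'"
  shows "compact_group M' S'"
proof -
  have tg: "topological_group M S" and top: "topspace S = carrier M" and "group M"
    using M by (simp_all add: compact_group_def topological_group_def)
  have e_hom: "group_hom M M' e"
    using \<open>group M\<close> M' iso by (simp add: group_hom_def group_hom_axioms_def iso_def)
  have e_cont: "continuous_map S S' e" and e'_cont: "continuous_map S' S e'"
    and e_e': "\<And>a. a \<in> carrier M' \<Longrightarrow> e (e' a) = a"
    using hm top' by (simp_all add: homeomorphic_maps_def)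
  have e'_carrier: "e' a \<in> carrier M" if "a \<in> carrier M'" for a
    using e'_cont that top top' by (auto simp: continuous_map_def)
  have "S homeomorphic_space S'"
    using hm homeomorphic_maps_imp_map homeomorphic_map_imp_homeomorphic_space by blast
  then have "Hausdorff_space S'" "compact_space S'"
    using M homeomorphic_Hausdorff_space homeomorphic_compact_space
    by (auto simp: compact_group_def)
  moreover have "continuous_map (prod_topology S' S') S' (\<lambda>(a, b). a \<otimes>\<^bsub>M'\<^esub> b)"
  proof -
    have "continuous_map (prod_topology S' S') S (\<lambda>z. e' (fst z) \<otimes>\<^bsub>M\<^esub> e' (snd z))"
      by (intro continuous_map_group_mult[OF tg]
          continuous_map_compose[OF continuous_map_fst e'_cont, unfolded o_def]
          continuous_map_compose[OF continuous_map_snd e'_cont, unfolded o_def])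
    from continuous_map_compose[OF this e_cont]
    show ?thesis
      by (rule continuous_map_eq) (auto simp: topspace_prod_topology top' e'_carrier e_e'
          group_hom.hom_mult[OF e_hom])
  qed
  moreover have "continuous_map S' S' (\<lambda>a. inv\<^bsub>M'\<^esub> a)"
  proof -
    have "continuous_map S' S' (\<lambda>a. e (inv\<^bsub>M\<^esub> e' a))"
      using continuous_map_compose[OF continuous_map_group_inv[OF tg e'_cont] e_cont]
      by (simp add: o_def)
    then show ?thesis
      by (rule continuous_map_eq) (simp add: top' e'_carrier e_e' group_hom.hom_inv[OF e_hom])
  qed
  ultimately show ?thesis
    using M' top' by (simp add: compact_group_def topological_group_def)
qed

lemma compact_group_transport:
  assumes M: "compact_group M S" and inj: "inj_on e (carrier M)"
  defines "S' \<equiv> pullback_topology (e ` carrier M) (inv_into (carrier M) e) S"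
  shows "compact_group (transport_monoid e M) S'"
    and "cont_hom M S (transport_monoid e M) S' e"
    and "cont_hom (transport_monoid e M) S' M S (inv_into (carrier M) e)"
proof -
  let ?M' = "transport_monoid e M" and ?e' = "inv_into (carrier M) e"
  have top: "topspace S = carrier M" and "group M"
    using M by (simp_all add: compact_group_def topological_group_def)
  have M': "group ?M'" and iso: "e \<in> iso M ?M'"
    using transport_monoid_iso[OF \<open>group M\<close> inj] by simp_all
  have hm: "homeomorphic_maps S S' e ?e'"
    using homeomorphic_maps_pullback_inv_into[of e S] inj by (simp add: S'_def top)
  have top': "topspace S' = carrier ?M'"
    using top by (auto simp: S'_def topspace_pullback_topology transport_monoid_def inv_into_into)
  show "compact_group ?M' S'"
    by (rule compact_group_iso_image[OF M M' top' iso hm])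
  show "cont_hom M S ?M' S' e"
    using iso hm by (simp add: cont_hom_def iso_def homeomorphic_maps_def)
  show "cont_hom ?M' S' M S ?e'"
    using group.iso_set_sym[OF \<open>group M\<close> iso] hm by (simp add: cont_hom_def iso_def homeomorphic_maps_def)
qed

lemma ap_compactification_extend:
  fixes G :: "('a, 'm) monoid_scheme" and M :: "('b, 'n) monoid_scheme"
  assumes \<eta>: "ap_compactification G T \<eta> K S" and \<alpha>: "group_compactification G T \<alpha> M R"
  shows "\<exists>\<phi>. cont_hom K S M R \<phi> \<and> (\<forall>x \<in> carrier G. \<phi> (\<eta> x) = \<alpha> x)"
proof -
  \<comment> \<open>The universal property only tests against compactifications carried by \<open>'a set set\<close>;
    one is obtained by sending each point of \<open>M\<close> to the traces on \<open>G\<close> of its open neighbourhoods.\<close>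
  define e :: "'b \<Rightarrow> 'a set set"
    where "e m = {{x \<in> carrier G. \<alpha> x \<in> U} | U. openin R U \<and> m \<in> U}" for m
  let ?M' = "transport_monoid e M" and ?e' = "inv_into (carrier M) e"
  let ?R' = "pullback_topology (e ` carrier M) ?e' R"
  have M: "compact_group M R"
    by (rule group_compactification_compact_group[OF \<alpha>])
  then have top: "topspace R = carrier M" and "Hausdorff_space R"
    by (simp_all add: compact_group_def topological_group_def)
  have inj: "inj_on e (carrier M)"
    using inj_on_neighbourhood_traces[OF \<open>Hausdorff_space R\<close> group_compactification_dense[OF \<alpha>]]
    by (simp add: e_def[abs_def] top)
  have "group_compactification G T (e \<circ> \<alpha>) ?M' ?R'"
    using group_compactification_image[OF \<alpha> compact_group_transport(2)[OF M inj] _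
        compact_group_transport(1)[OF M inj]]
    by (simp add: transport_monoid_def)
  with \<eta> obtain \<phi>' where \<phi>': "cont_hom K S ?M' ?R' \<phi>'" "\<forall>x \<in> carrier G. \<phi>' (\<eta> x) = (e \<circ> \<alpha>) x"
    unfolding ap_compactification_def by blast
  have "\<forall>x \<in> carrier G. (?e' \<circ> \<phi>') (\<eta> x) = \<alpha> x"
    using \<phi>'(2) inv_into_f_f[OF inj] cont_hom_in_carrier[OF group_compactification_cont_hom[OF \<alpha>]]
    by simp
  then show ?thesis
    using cont_hom_compose[OF \<phi>'(1) compact_group_transport(3)[OF M inj]] by blast
qed

lemma ap_compactification_extend_comp_quot:
  assumes \<eta>: "ap_compactification G T \<eta> K S" and M: "topological_group M R"
    and \<alpha>: "group_compactification G T \<alpha> (comp_quot_group M R) (comp_quot_top M R)"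
  shows "\<exists>\<phi>. cont_hom (comp_quot_group K S) (comp_quot_top K S)
      (comp_quot_group M R) (comp_quot_top M R) \<phi> \<and>
    (\<forall>x \<in> carrier G. \<phi> (comp_quot_map K S (\<eta> x)) = \<alpha> x)"
proof -
  obtain \<phi>\<^sub>0 where \<phi>\<^sub>0: "cont_hom K S (comp_quot_group M R) (comp_quot_top M R) \<phi>\<^sub>0"
    "\<forall>x \<in> carrier G. \<phi>\<^sub>0 (\<eta> x) = \<alpha> x"
    using ap_compactification_extend[OF \<eta> \<alpha>] by blast
  have \<eta>_gc: "group_compactification G T \<eta> K S"
    using \<eta> by (simp add: ap_compactification_def)
  then have K: "topological_group K S"
    by (simp add: compact_group_topological_group group_compactification_compact_group)
  obtain \<phi> where \<phi>: "cont_hom (comp_quot_group K S) (comp_quot_top K S)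
      (comp_quot_group M R) (comp_quot_top M R) \<phi>"
    "\<forall>k \<in> carrier K. \<phi> (comp_quot_map K S k) = \<phi>\<^sub>0 k"
    using comp_quot_lift_into_comp_quot[OF K M \<phi>\<^sub>0(1)] by blast
  have "\<eta> x \<in> carrier K" if "x \<in> carrier G" for x
    using cont_hom_in_carrier[OF group_compactification_cont_hom[OF \<eta>_gc] that] .
  with \<phi> \<phi>\<^sub>0(2) show ?thesis
    by auto
qed

theorem proposition2p2:
  fixes G :: "('a, 'm) monoid_scheme" and TG :: "'a topology"
    and \<eta> :: "'a \<Rightarrow> 'b" and K :: "('b, 'n) monoid_scheme" and TK :: "'b topology"
    and \<zeta> :: "'a set \<Rightarrow> 'c" and L :: "('c, 'p) monoid_scheme" and TL :: "'c topology"
  assumes "locally_compact_group G TG"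
    and "ap_compactification G TG \<eta> K TK"
    and "ap_compactification (comp_quot_group G TG) (comp_quot_top G TG) \<zeta> L TL"
  shows "\<exists>\<theta>. top_group_iso (comp_quot_group K TK) (comp_quot_top K TK)
                          (comp_quot_group L TL) (comp_quot_top L TL) \<theta> \<and>
             (\<forall>x \<in> carrier G. \<theta> (comp_quot_map K TK (\<eta> x)) =
                               comp_quot_map L TL (\<zeta> (comp_quot_map G TG x)))"
proof -
  have G: "topological_group G TG"
    using assms(1) by (simp add: locally_compact_group_def)
  have \<eta>: "group_compactification G TG \<eta> K TK"
    and \<zeta>: "group_compactification (comp_quot_group G TG) (comp_quot_top G TG) \<zeta> L TL"
    using assms(2,3) by (simp_all add: ap_compactification_def)
  have K: "topological_group K TK" and L: "topological_group L TL"
    using \<eta> \<zeta> by (simp_all add: compact_group_topological_group group_compactification_compact_group)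
  note qK = group_compactification_comp_quot[OF \<eta>]
  have qL: "group_compactification G TG (comp_quot_map L TL \<circ> \<zeta> \<circ> comp_quot_map G TG)
      (comp_quot_group L TL) (comp_quot_top L TL)"
    by (rule group_compactification_pullback[OF group_compactification_comp_quot[OF \<zeta>]
          cont_hom_comp_quot_map[OF G] carrier_comp_quot_group[OF G, symmetric]])
  obtain \<beta> where \<beta>: "group_compactification (comp_quot_group G TG) (comp_quot_top G TG) \<beta>
      (comp_quot_group K TK) (comp_quot_top K TK)"
    "\<forall>x \<in> carrier G. \<beta> (comp_quot_map G TG x) = comp_quot_map K TK (\<eta> x)"
    using group_compactification_factor_comp_quot[OF G K qK] by auto
  obtain \<psi> where \<psi>: "cont_hom (comp_quot_group L TL) (comp_quot_top L TL)
      (comp_quot_group K TK) (comp_quot_top K TK) \<psi>"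
    "\<forall>c \<in> carrier (comp_quot_group G TG). \<psi> (comp_quot_map L TL (\<zeta> c)) = \<beta> c"
    using ap_compactification_extend_comp_quot[OF assms(3) K \<beta>(1)] by blast
  obtain \<phi> where \<phi>: "cont_hom (comp_quot_group K TK) (comp_quot_top K TK)
      (comp_quot_group L TL) (comp_quot_top L TL) \<phi>"
    "\<forall>x \<in> carrier G. \<phi> (comp_quot_map K TK (\<eta> x)) = comp_quot_map L TL (\<zeta> (comp_quot_map G TG x))"
    using ap_compactification_extend_comp_quot[OF assms(2) L qL] by auto
  have "top_group_iso (comp_quot_group K TK) (comp_quot_top K TK)
      (comp_quot_group L TL) (comp_quot_top L TL) \<phi>"
    by (rule group_compactifications_iso[OF qK qL \<phi>(1) \<psi>(1)])
      (use \<phi>(2) \<psi>(2) \<beta>(2) carrier_comp_quot_group[OF G] in auto)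
  with \<phi>(2) show ?thesis
    by blast
qed

end
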